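(* Let $L$ be a multisorted algebra in the positive quantifier-free signature with equality satisfying axioms (1), (2), (3), (11), (12), (13). Let $F$ be a prime filter on sort $n$ of $L$. Let $F_1,\dots,F_n$ be symbols such that $F_i=F_j$ if and only if $\Delta^n_{i,j}\in F$, and let $W=\{F_1,\dots,F_n\}$. Define $\varphi\colon L\to A(W)$ on each sort $k$ by: for each substitution $\alpha\colon k\to n$, $\alpha^{\mathrm{tuple}}(F_1,\dots,F_n)\in\varphi(r)$ if and only if $\alpha(r)\in F$. Then $\varphi$ is (well defined and) a morphism of positive quantifier-free algebras with equality.
   Context: Signature. There is a sort $n$ for each $n\ge0$. For every function $\alpha\colon\{1,\dots,n\}\to\{1,\dots,k\}$ there is a unary function symbol ("substitution") $\alpha\colon n\to k$ (argument of sort $n$, value of sort $k$). Each sort has constants $0,1$ and binary $\vee,\wedge$; for each $n$ and $1\le i,j\le n$ there is a constant $\Delta^n_{i,j}$ of sort $n$. This is the positive quantifier-free signature with equality. For $\alpha\colon k\to n$, $\beta\colon n\to m$, $\beta\circ\alpha$ is the substitution symbol of the composite function. For a set $W$: $\alpha^{\mathrm{tuple}}(x_1,\dots,x_k)=(x_{\alpha(1)},\dots,x_{\alpha(n)})$, $\alpha^{\mathrm{relation}}(r)=\{\bar x\in W^k:\alpha^{\mathrm{tuple}}(\bar x)\in r\}$. The positive quantifier-free algebra with equality $A(W)$ interprets sort $n$ as $\mathcal P(W^n)$, $\alpha$ as $\alpha^{\mathrm{relation}}$, $0,1,\vee,\wedge$ as $\emptyset,W^n,\cup,\cap$, and $\Delta^n_{i,j}=\{(x_1,\dots,x_n)\in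 W^n: x_i=x_j\}$. $x\le y$ means $x=x\wedge y$. Axioms: (1) each sort is a bounded distributive lattice; (2) substitutions preserve $0,1,\vee,\wedge$; (3) $(\beta\circ\alpha)(r)=\beta(\alpha(r))$; (11) $\Delta^n_{i,i}=1$, $\Delta^n_{i,j}=\Delta^n_{j,i}$, $\Delta^n_{i,j}\wedge\Delta^n_{j,k}\le\Delta^n_{i,k}$; (12) for substitutions $\alpha,\beta\colon k\to n$ and all $r$ of sort $k$: $\alpha(r)\wedge\bigwedge_{l=1}^k\Delta^n_{\alpha(l),\beta(l)}=\beta(r)\wedge\bigwedge_{l=1}^k\Delta^n_{\alpha(l),\beta(l)}$; (13) for each substitution $\alpha\colon k\to n$: $\alpha(\Delta^k_{i,j})=\Delta^n_{\alpha(i),\alpha(j)}$. A prime filter is a proper, nonempty, upward-closed, $\wedge$-closed subset of a sort with $x\vee y\in F\Rightarrow x\in F$ or $y\in F$. *)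

theory Defs
  imports "HOL-Library.FuncSet"
begin

text \<open>A substitution symbol alpha : n -> k (argument sort n,
  value sort k) is represented by an extensional function alpha in {1..n} ->E {1..k}.
  psub L n k alpha is the operation of that symbol.\<close>

record 'a pqf_alg =
  car    :: "nat \<Rightarrow> 'a set"
  pzero  :: "nat \<Rightarrow> 'a"
  pone   :: "nat \<Rightarrow> 'a"
  pjoin  :: "nat \<Rightarrow> 'a \<Rightarrow> 'a \<Rightarrow> 'a"
  pmeet  :: "nat \<Rightarrow> 'a \<Rightarrow> 'a \<Rightarrow> 'a"
  pdelta :: "nat \<Rightarrow> nat \<Rightarrow> nat \<Rightarrow> 'a"
  psub   :: "nat \<Rightarrow> nat \<Rightarrow> (nat \<Rightarrow> nat) \<Rightarrow> 'a \<Rightarrow> 'a"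

definition substs :: "nat \<Rightarrow> nat \<Rightarrow> (nat \<Rightarrow> nat) set" where
  "substs n k = ({1..n} \<rightarrow>\<^sub>E {1..k})"

definition comp_subst :: "nat \<Rightarrow> (nat \<Rightarrow> nat) \<Rightarrow> (nat \<Rightarrow> nat) \<Rightarrow> (nat \<Rightarrow> nat)" where
  "comp_subst k beta alpha = restrict (beta \<circ> alpha) {1..k}"

definition ple :: "'a pqf_alg \<Rightarrow> nat \<Rightarrow> 'a \<Rightarrow> 'a \<Rightarrow> bool" where
  "ple L n x y \<longleftrightarrow> x = pmeet L n x y"

fun bigmeet :: "'a pqf_alg \<Rightarrow> nat \<Rightarrow> (nat \<Rightarrow> 'a) \<Rightarrow> nat \<Rightarrow> 'a" where
  "bigmeet L n f 0 = pone L n"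
| "bigmeet L n f (Suc l) = pmeet L n (bigmeet L n f l) (f (Suc l))"

definition pqf_closed :: "'a pqf_alg \<Rightarrow> bool" where
  "pqf_closed L \<longleftrightarrow>
     (\<forall>n. pzero L n \<in> car L n \<and> pone L n \<in> car L n
        \<and> (\<forall>x\<in>car L n. \<forall>y\<in>car L n. pjoin L n x y \<in> car L n \<and> pmeet L n x y \<in> car L n)
        \<and> (\<forall>i\<in>{1..n}. \<forall>j\<in>{1..n}. pdelta L n i j \<in> car L n))
   \<and> (\<forall>n k. \<forall>\<alpha>\<in>substs n k. \<forall>r\<in>car L n. psub L n k \<alpha> r \<in> car L k)"

definition pqf_ax1 :: "'a pqf_alg \<Rightarrow> bool" where
  "pqf_ax1 L \<longleftrightarrow> (\<forall>n. \<forall>x\<in>car L n. \<forall>y\<in>car L n. \<forall>z\<in>car L n.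
       pjoin L n (pjoin L n x y) z = pjoin L n x (pjoin L n y z)
     \<and> pmeet L n (pmeet L n x y) z = pmeet L n x (pmeet L n y z)
     \<and> pjoin L n x y = pjoin L n y x
     \<and> pmeet L n x y = pmeet L n y x
     \<and> pjoin L n x x = x
     \<and> pmeet L n x x = x
     \<and> pjoin L n x (pmeet L n x y) = x
     \<and> pmeet L n x (pjoin L n x y) = x
     \<and> pmeet L n x (pjoin L n y z) = pjoin L n (pmeet L n x y) (pmeet L n x z)
     \<and> pjoin L n x (pmeet L n y z) = pmeet L n (pjoin L n x y) (pjoin L n x z)
     \<and> pjoin L n x (pzero L n) = x
     \<and> pmeet L n x (pone L n) = x)"

definition pqf_ax2 :: "'a pqf_alg \<Rightarrow> bool" where
  "pqf_ax2 L \<longleftrightarrow> (\<forall>n k. \<forall>\<alpha>\<in>substs n k.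
       psub L n k \<alpha> (pzero L n) = pzero L k
     \<and> psub L n k \<alpha> (pone L n) = pone L k
     \<and> (\<forall>x\<in>car L n. \<forall>y\<in>car L n.
          psub L n k \<alpha> (pjoin L n x y) = pjoin L k (psub L n k \<alpha> x) (psub L n k \<alpha> y)
        \<and> psub L n k \<alpha> (pmeet L n x y) = pmeet L k (psub L n k \<alpha> x) (psub L n k \<alpha> y)))"

definition pqf_ax3 :: "'a pqf_alg \<Rightarrow> bool" where
  "pqf_ax3 L \<longleftrightarrow> (\<forall>k n m. \<forall>\<alpha>\<in>substs k n. \<forall>\<beta>\<in>substs n m. \<forall>r\<in>car L k.
       psub L k m (comp_subst k \<beta> \<alpha>) r = psub L n m \<beta> (psub L k n \<alpha> r))"

definition pqf_ax11 :: "'a pqf_alg \<Rightarrow> bool" where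
  "pqf_ax11 L \<longleftrightarrow> (\<forall>n. \<forall>i\<in>{1..n}. \<forall>j\<in>{1..n}. \<forall>k\<in>{1..n}.
       pdelta L n i i = pone L n
     \<and> pdelta L n i j = pdelta L n j i
     \<and> ple L n (pmeet L n (pdelta L n i j) (pdelta L n j k)) (pdelta L n i k))"

definition pqf_ax12 :: "'a pqf_alg \<Rightarrow> bool" where
  "pqf_ax12 L \<longleftrightarrow> (\<forall>k n. \<forall>\<alpha>\<in>substs k n. \<forall>\<beta>\<in>substs k n. \<forall>r\<in>car L k.
       pmeet L n (psub L k n \<alpha> r) (bigmeet L n (\<lambda>l. pdelta L n (\<alpha> l) (\<beta> l)) k)
     = pmeet L n (psub L k n \<beta> r) (bigmeet L n (\<lambda>l. pdelta L n (\<alpha> l) (\<beta> l)) k))"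

definition pqf_ax13 :: "'a pqf_alg \<Rightarrow> bool" where
  "pqf_ax13 L \<longleftrightarrow> (\<forall>k n. \<forall>\<alpha>\<in>substs k n. \<forall>i\<in>{1..k}. \<forall>j\<in>{1..k}.
       psub L k n \<alpha> (pdelta L k i j) = pdelta L n (\<alpha> i) (\<alpha> j))"

definition prime_filter :: "'a pqf_alg \<Rightarrow> nat \<Rightarrow> 'a set \<Rightarrow> bool" where
  "prime_filter L n F \<longleftrightarrow>
     F \<subseteq> car L n \<and> F \<noteq> car L n \<and> F \<noteq> {}
   \<and> (\<forall>x\<in>F. \<forall>y\<in>car L n. ple L n x y \<longrightarrow> y \<in> F)
   \<and> (\<forall>x\<in>F. \<forall>y\<in>F. pmeet L n x y \<in> F)
   \<and> (\<forall>x\<in>car L n. \<forall>y\<in>car L n. pjoin L n x y \<in> F \<longrightarrow> x \<in> F \<or> y \<in> F)"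

text \<open>The algebra A(W): sort n is the powerset of W^n, where W^n is represented
  by extensional tuples {1..n} ->E W.\<close>
definition tuples :: "nat \<Rightarrow> 'w set \<Rightarrow> (nat \<Rightarrow> 'w) set" where
  "tuples n W = ({1..n} \<rightarrow>\<^sub>E W)"

definition tuple_sub :: "nat \<Rightarrow> (nat \<Rightarrow> nat) \<Rightarrow> (nat \<Rightarrow> 'w) \<Rightarrow> (nat \<Rightarrow> 'w)" where
  "tuple_sub n \<alpha> x = restrict (x \<circ> \<alpha>) {1..n}"

definition rel_sub :: "'w set \<Rightarrow> nat \<Rightarrow> nat \<Rightarrow> (nat \<Rightarrow> nat) \<Rightarrow> (nat \<Rightarrow> 'w) set \<Rightarrow> (nat \<Rightarrow> 'w) set" where
  "rel_sub W n k \<alpha> R = {x \<in> tuples k W. tuple_sub n \<alpha> x \<in> R}"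

definition diagA :: "'w set \<Rightarrow> nat \<Rightarrow> nat \<Rightarrow> nat \<Rightarrow> (nat \<Rightarrow> 'w) set" where
  "diagA W n i j = {x \<in> tuples n W. x i = x j}"

definition pqf_hom_to_A :: "'a pqf_alg \<Rightarrow> 'w set \<Rightarrow> (nat \<Rightarrow> 'a \<Rightarrow> (nat \<Rightarrow> 'w) set) \<Rightarrow> bool" where
  "pqf_hom_to_A L W \<phi> \<longleftrightarrow>
     (\<forall>k. (\<forall>r\<in>car L k. \<phi> k r \<subseteq> tuples k W)
        \<and> \<phi> k (pzero L k) = {}
        \<and> \<phi> k (pone L k) = tuples k W
        \<and> (\<forall>r\<in>car L k. \<forall>s\<in>car L k.
              \<phi> k (pjoin L k r s) = \<phi> k r \<union> \<phi> k s
            \<and> \<phi> k (pmeet L k r s) = \<phi> k r \<inter> \<phi> k s)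
        \<and> (\<forall>i\<in>{1..k}. \<forall>j\<in>{1..k}. \<phi> k (pdelta L k i j) = diagA W k i j))
   \<and> (\<forall>k m. \<forall>\<alpha>\<in>substs k m. \<forall>r\<in>car L k.
        \<phi> m (psub L k m \<alpha> r) = rel_sub W k m \<alpha> (\<phi> k r))"

text \<open>The map phi of the lemma: for alpha : k -> n, alpha^tuple(F_1..F_n) is in phi(r)
  iff alpha(r) in F; every element of W^k has this form.\<close>
definition phiF :: "'a pqf_alg \<Rightarrow> nat \<Rightarrow> 'a set \<Rightarrow> (nat \<Rightarrow> 'w) \<Rightarrow> nat \<Rightarrow> 'a \<Rightarrow> (nat \<Rightarrow> 'w) set" where
  "phiF L n F Fs k r =
     {tuple_sub k \<alpha> Fs | \<alpha>. \<alpha> \<in> substs k n \<and> psub L k n \<alpha> r \<in> F}"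

end

theory Submission
  imports Defs
begin

text \<open>Every tuple over \<open>W = {F\<^sub>1, \<dots>, F\<^sub>n}\<close> has the form \<open>\<alpha>\<^sup>t\<^sup>u\<^sup>p\<^sup>l\<^sup>e(F\<^sub>1, \<dots>, F\<^sub>n)\<close>,
  so \<open>\<phi>(r)\<close> is pinned down by which \<open>\<alpha>(r)\<close> lie in \<open>F\<close>, and two subsets of \<open>W\<^sup>k\<close> coincide as
  soon as they agree on such tuples. If \<alpha> and \<beta> give the same tuple, then every
  \<open>\<Delta>(\<alpha> l, \<beta> l)\<close> lies in \<open>F\<close>, hence so does their meet, and axiom (12) shows that
  \<open>\<alpha>(r) \<in> F \<longleftrightarrow> \<beta>(r) \<in> F\<close>: \<open>\<phi>\<close> is well defined. Preservation of \<open>0, 1, \<or>, \<and>\<close> is axiom (2)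
  together with \<open>F\<close> being a prime filter, preservation of the diagonals is axiom (13) together
  with the choice of the \<open>F\<^sub>i\<close>, and preservation of substitutions is axiom (3), since
  substitutions of tuples compose.\<close>

lemma substs_apply: "\<alpha> \<in> substs k n \<Longrightarrow> l \<in> {1..k} \<Longrightarrow> \<alpha> l \<in> {1..n}"
  unfolding substs_def by auto

lemma comp_subst_in_substs:
  "\<alpha> \<in> substs k m \<Longrightarrow> \<beta> \<in> substs m n \<Longrightarrow> comp_subst k \<beta> \<alpha> \<in> substs k n"
  unfolding substs_def comp_subst_def by auto

lemma tuple_sub_comp_subst:
  assumes "\<alpha> \<in> substs k m"
  shows "tuple_sub k \<alpha> (tuple_sub m \<beta> x) = tuple_sub k (comp_subst k \<beta> \<alpha>) x"
  using substs_apply[OF assms] unfolding tuple_sub_def comp_subst_def by auto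

lemma tuple_sub_in_tuples: "\<alpha> \<in> substs k n \<Longrightarrow> tuple_sub k \<alpha> x \<in> tuples k (x ` {1..n})"
  unfolding tuple_sub_def tuples_def substs_def by auto

lemma tuples_image_eq_tuple_sub:
  "tuples k (x ` {1..n}) = (\<lambda>\<alpha>. tuple_sub k \<alpha> x) ` substs k n"
proof
  show "(\<lambda>\<alpha>. tuple_sub k \<alpha> x) ` substs k n \<subseteq> tuples k (x ` {1..n})"
    using tuple_sub_in_tuples by blast
  show "tuples k (x ` {1..n}) \<subseteq> (\<lambda>\<alpha>. tuple_sub k \<alpha> x) ` substs k n"
  proof
    fix y assume y: "y \<in> tuples k (x ` {1..n})"
    then have "\<forall>l\<in>{1..k}. \<exists>i\<in>{1..n}. y l = x i"
      unfolding tuples_def by blast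
    then obtain \<alpha> where \<alpha>: "\<forall>l\<in>{1..k}. \<alpha> l \<in> {1..n} \<and> y l = x (\<alpha> l)"
      by metis
    have "restrict \<alpha> {1..k} \<in> substs k n"
      using \<alpha> unfolding substs_def by auto
    moreover have "y = tuple_sub k (restrict \<alpha> {1..k}) x"
    proof
      fix l show "y l = tuple_sub k (restrict \<alpha> {1..k}) x l"
        using y \<alpha> unfolding tuples_def tuple_sub_def by (cases "l \<in> {1..k}") auto
    qed
    ultimately show "y \<in> (\<lambda>\<alpha>. tuple_sub k \<alpha> x) ` substs k n"
      by blast
  qed
qed

lemma tuples_subset_eqI:
  assumes "A \<subseteq> tuples k (x ` {1..n})" and "B \<subseteq> tuples k (x ` {1..n})"
    and "\<And>\<alpha>. \<alpha> \<in> substs k n \<Longrightarrow> tuple_sub k \<alpha> x \<in> A \<longleftrightarrow> tuple_sub k \<alpha> x \<in> B"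
  shows "A = B"
proof (rule set_eqI)
  fix y
  show "y \<in> A \<longleftrightarrow> y \<in> B"
  proof (cases "y \<in> tuples k (x ` {1..n})")
    case True
    then obtain \<alpha> where "\<alpha> \<in> substs k n" and "y = tuple_sub k \<alpha> x"
      unfolding tuples_image_eq_tuple_sub by blast
    then show ?thesis
      using assms(3) by simp
  next
    case False
    then show ?thesis
      using assms(1,2) by blast
  qed
qed

locale pqf_prime_filter =
  fixes L :: "'a pqf_alg" and n :: nat and F :: "'a set"
  assumes closed: "pqf_closed L"
    and lattice: "pqf_ax1 L"
    and prime: "prime_filter L n F"
begin

lemma mem_car: "x \<in> F \<Longrightarrow> x \<in> car L n"
  using prime unfolding prime_filter_def by blast

lemma upward: "x \<in> F \<Longrightarrow> y \<in> car L n \<Longrightarrow> pmeet L n x y = x \<Longrightarrow> y \<in> F"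
  using prime unfolding prime_filter_def ple_def by metis

lemma one_mem: "pone L n \<in> F"
proof -
  obtain x where x: "x \<in> F"
    using prime unfolding prime_filter_def by blast
  have "pmeet L n x (pone L n) = x"
    using lattice mem_car[OF x] unfolding pqf_ax1_def by blast
  with x show ?thesis
    using upward closed unfolding pqf_closed_def by blast
qed

lemma zero_not_mem: "pzero L n \<notin> F"
proof
  assume zero: "pzero L n \<in> F"
  have zero_car: "pzero L n \<in> car L n"
    using closed unfolding pqf_closed_def by blast
  have "car L n \<subseteq> F"
  proof
    fix y assume y: "y \<in> car L n"
    have "pmeet L n (pzero L n) (pjoin L n (pzero L n) y) = pzero L n"
      and "pjoin L n (pzero L n) y = y"
      using lattice y zero_car unfolding pqf_ax1_def by metis+
    then show "y \<in> F"
      using upward[OF zero y] by simp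
  qed
  then show False
    using prime unfolding prime_filter_def by blast
qed

lemma meet_mem_iff:
  assumes "x \<in> car L n" and "y \<in> car L n"
  shows "pmeet L n x y \<in> F \<longleftrightarrow> x \<in> F \<and> y \<in> F"
proof
  assume meet: "pmeet L n x y \<in> F"
  have "pmeet L n (pmeet L n x y) x = pmeet L n x y"
    and "pmeet L n (pmeet L n x y) y = pmeet L n x y"
    using lattice assms unfolding pqf_ax1_def by metis+
  then show "x \<in> F \<and> y \<in> F"
    using upward[OF meet] assms by blast
next
  assume "x \<in> F \<and> y \<in> F"
  then show "pmeet L n x y \<in> F"
    using prime unfolding prime_filter_def by blast
qed

lemma join_mem_iff:
  assumes "x \<in> car L n" and "y \<in> car L n"
  shows "pjoin L n x y \<in> F \<longleftrightarrow> x \<in> F \<or> y \<in> F"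
proof
  assume "pjoin L n x y \<in> F"
  then show "x \<in> F \<or> y \<in> F"
    using prime assms unfolding prime_filter_def by blast
next
  assume "x \<in> F \<or> y \<in> F"
  moreover have "pjoin L n x y \<in> car L n"
    using closed assms unfolding pqf_closed_def by blast
  moreover have "pmeet L n x (pjoin L n x y) = x"
    and "pmeet L n y (pjoin L n y x) = y" and "pjoin L n y x = pjoin L n x y"
    using lattice assms unfolding pqf_ax1_def by metis+
  ultimately show "pjoin L n x y \<in> F"
    using upward by metis
qed

lemma bigmeet_mem: "(\<And>l. l \<in> {1..k} \<Longrightarrow> f l \<in> F) \<Longrightarrow> bigmeet L n f k \<in> F"
proof (induction k)
  case 0
  then show ?case
    using one_mem by simp
next
  case (Suc k)
  then show ?case
    using prime unfolding prime_filter_def by simp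
qed

end

locale pqf_canonical_model = pqf_prime_filter L n F
  for L :: "'a pqf_alg" and n :: nat and F :: "'a set" +
  fixes Fs :: "nat \<Rightarrow> 'w"
  assumes subst_lattice_hom: "pqf_ax2 L"
    and subst_comp: "pqf_ax3 L"
    and subst_diag: "pqf_ax12 L"
    and subst_delta: "pqf_ax13 L"
    and names_eq_iff: "\<forall>i\<in>{1..n}. \<forall>j\<in>{1..n}. Fs i = Fs j \<longleftrightarrow> pdelta L n i j \<in> F"
begin

abbreviation W :: "'w set" where
  "W \<equiv> Fs ` {1..n}"

abbreviation \<phi> :: "nat \<Rightarrow> 'a \<Rightarrow> (nat \<Rightarrow> 'w) set" where
  "\<phi> \<equiv> phiF L n F Fs"

lemma psub_car: "\<alpha> \<in> substs k m \<Longrightarrow> r \<in> car L k \<Longrightarrow> psub L k m \<alpha> r \<in> car L m"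
  using closed unfolding pqf_closed_def by blast

lemma psub_mem_if_tuple_sub_eq:
  assumes \<alpha>: "\<alpha> \<in> substs k n" and \<beta>: "\<beta> \<in> substs k n" and r: "r \<in> car L k"
    and eq: "tuple_sub k \<alpha> Fs = tuple_sub k \<beta> Fs"
    and mem: "psub L k n \<alpha> r \<in> F"
  shows "psub L k n \<beta> r \<in> F"
proof -
  define D where "D = bigmeet L n (\<lambda>l. pdelta L n (\<alpha> l) (\<beta> l)) k"
  have "pdelta L n (\<alpha> l) (\<beta> l) \<in> F" if l: "l \<in> {1..k}" for l
  proof -
    have "Fs (\<alpha> l) = Fs (\<beta> l)"
      using fun_cong[OF eq, of l] l unfolding tuple_sub_def by simp
    then show ?thesis
      using names_eq_iff substs_apply[OF \<alpha> l] substs_apply[OF \<beta> l] by blast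
  qed
  then have D: "D \<in> F"
    unfolding D_def by (rule bigmeet_mem)
  have "pmeet L n (psub L k n \<alpha> r) D \<in> F"
    using meet_mem_iff[OF psub_car[OF \<alpha> r] mem_car[OF D]] mem D by blast
  moreover have "pmeet L n (psub L k n \<alpha> r) D = pmeet L n (psub L k n \<beta> r) D"
    using subst_diag \<alpha> \<beta> r unfolding pqf_ax12_def D_def by blast
  ultimately have "pmeet L n (psub L k n \<beta> r) D \<in> F"
    by simp
  then show ?thesis
    using meet_mem_iff[OF psub_car[OF \<beta> r] mem_car[OF D]] by blast
qed

lemma tuple_sub_mem_phi_iff:
  assumes "\<alpha> \<in> substs k n" and "r \<in> car L k"
  shows "tuple_sub k \<alpha> Fs \<in> \<phi> k r \<longleftrightarrow> psub L k n \<alpha> r \<in> F"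
proof
  assume "tuple_sub k \<alpha> Fs \<in> \<phi> k r"
  then obtain \<beta> where eq: "tuple_sub k \<alpha> Fs = tuple_sub k \<beta> Fs"
    and \<beta>: "\<beta> \<in> substs k n" and mem: "psub L k n \<beta> r \<in> F"
    unfolding phiF_def mem_Collect_eq by blast
  show "psub L k n \<alpha> r \<in> F"
    by (rule psub_mem_if_tuple_sub_eq[OF \<beta> assms eq[symmetric] mem])
next
  assume "psub L k n \<alpha> r \<in> F"
  then show "tuple_sub k \<alpha> Fs \<in> \<phi> k r"
    unfolding phiF_def using assms(1) by blast
qed

lemma phi_subset_tuples: "\<phi> k r \<subseteq> tuples k W"
  unfolding phiF_def using tuple_sub_in_tuples by blast

lemma phi_eqI:
  assumes "A \<subseteq> tuples k W" and "r \<in> car L k"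
    and "\<And>\<alpha>. \<alpha> \<in> substs k n \<Longrightarrow> psub L k n \<alpha> r \<in> F \<longleftrightarrow> tuple_sub k \<alpha> Fs \<in> A"
  shows "\<phi> k r = A"
proof (rule tuples_subset_eqI[OF phi_subset_tuples assms(1)])
  fix \<alpha> assume "\<alpha> \<in> substs k n"
  then show "tuple_sub k \<alpha> Fs \<in> \<phi> k r \<longleftrightarrow> tuple_sub k \<alpha> Fs \<in> A"
    using tuple_sub_mem_phi_iff assms(2,3) by simp
qed

lemma phi_zero: "\<phi> k (pzero L k) = {}"
  using subst_lattice_hom zero_not_mem unfolding phiF_def pqf_ax2_def by auto

lemma phi_one: "\<phi> k (pone L k) = tuples k W"
proof (rule phi_eqI)
  show "pone L k \<in> car L k"
    using closed unfolding pqf_closed_def by blast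
  fix \<alpha> assume "\<alpha> \<in> substs k n"
  then show "psub L k n \<alpha> (pone L k) \<in> F \<longleftrightarrow> tuple_sub k \<alpha> Fs \<in> tuples k W"
    using subst_lattice_hom one_mem tuple_sub_in_tuples unfolding pqf_ax2_def by auto
qed simp

lemma phi_join:
  assumes r: "r \<in> car L k" and s: "s \<in> car L k"
  shows "\<phi> k (pjoin L k r s) = \<phi> k r \<union> \<phi> k s"
proof (rule phi_eqI)
  show "pjoin L k r s \<in> car L k"
    using closed r s unfolding pqf_closed_def by blast
  fix \<alpha> assume \<alpha>: "\<alpha> \<in> substs k n"
  have "psub L k n \<alpha> (pjoin L k r s) = pjoin L n (psub L k n \<alpha> r) (psub L k n \<alpha> s)"
    using subst_lattice_hom \<alpha> r s unfolding pqf_ax2_def by blast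
  then show "psub L k n \<alpha> (pjoin L k r s) \<in> F \<longleftrightarrow> tuple_sub k \<alpha> Fs \<in> \<phi> k r \<union> \<phi> k s"
    using join_mem_iff psub_car[OF \<alpha>] tuple_sub_mem_phi_iff[OF \<alpha>] r s by simp
qed (use phi_subset_tuples in blast)

lemma phi_meet:
  assumes r: "r \<in> car L k" and s: "s \<in> car L k"
  shows "\<phi> k (pmeet L k r s) = \<phi> k r \<inter> \<phi> k s"
proof (rule phi_eqI)
  show "pmeet L k r s \<in> car L k"
    using closed r s unfolding pqf_closed_def by blast
  fix \<alpha> assume \<alpha>: "\<alpha> \<in> substs k n"
  have "psub L k n \<alpha> (pmeet L k r s) = pmeet L n (psub L k n \<alpha> r) (psub L k n \<alpha> s)"
    using subst_lattice_hom \<alpha> r s unfolding pqf_ax2_def by blast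
  then show "psub L k n \<alpha> (pmeet L k r s) \<in> F \<longleftrightarrow> tuple_sub k \<alpha> Fs \<in> \<phi> k r \<inter> \<phi> k s"
    using meet_mem_iff psub_car[OF \<alpha>] tuple_sub_mem_phi_iff[OF \<alpha>] r s by simp
qed (use phi_subset_tuples in blast)

lemma phi_delta:
  assumes i: "i \<in> {1..k}" and j: "j \<in> {1..k}"
  shows "\<phi> k (pdelta L k i j) = diagA W k i j"
proof (rule phi_eqI)
  show "diagA W k i j \<subseteq> tuples k W"
    unfolding diagA_def by blast
  show "pdelta L k i j \<in> car L k"
    using closed i j unfolding pqf_closed_def by blast
  fix \<alpha> assume \<alpha>: "\<alpha> \<in> substs k n"
  have "psub L k n \<alpha> (pdelta L k i j) = pdelta L n (\<alpha> i) (\<alpha> j)"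
    using subst_delta \<alpha> i j unfolding pqf_ax13_def by blast
  then have "psub L k n \<alpha> (pdelta L k i j) \<in> F \<longleftrightarrow> Fs (\<alpha> i) = Fs (\<alpha> j)"
    using names_eq_iff substs_apply[OF \<alpha> i] substs_apply[OF \<alpha> j] by auto
  also have "\<dots> \<longleftrightarrow> tuple_sub k \<alpha> Fs \<in> diagA W k i j"
    using tuple_sub_in_tuples[OF \<alpha>, of Fs] i j unfolding diagA_def tuple_sub_def by auto
  finally show "psub L k n \<alpha> (pdelta L k i j) \<in> F \<longleftrightarrow> tuple_sub k \<alpha> Fs \<in> diagA W k i j" .
qed

lemma phi_psub:
  assumes \<alpha>: "\<alpha> \<in> substs k m" and r: "r \<in> car L k"
  shows "\<phi> m (psub L k m \<alpha> r) = rel_sub W k m \<alpha> (\<phi> k r)"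
proof (rule phi_eqI)
  show "rel_sub W k m \<alpha> (\<phi> k r) \<subseteq> tuples m W"
    unfolding rel_sub_def by blast
  show "psub L k m \<alpha> r \<in> car L m"
    using psub_car[OF \<alpha> r] .
  fix \<beta> assume \<beta>: "\<beta> \<in> substs m n"
  have "psub L m n \<beta> (psub L k m \<alpha> r) = psub L k n (comp_subst k \<beta> \<alpha>) r"
    using subst_comp \<alpha> \<beta> r unfolding pqf_ax3_def by metis
  moreover note tuple_sub_in_tuples[OF \<beta>, of Fs]
  ultimately show "psub L m n \<beta> (psub L k m \<alpha> r) \<in> F \<longleftrightarrow>
      tuple_sub m \<beta> Fs \<in> rel_sub W k m \<alpha> (\<phi> k r)"
    using tuple_sub_mem_phi_iff[OF comp_subst_in_substs[OF \<alpha> \<beta>] r]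
    by (simp add: rel_sub_def tuple_sub_comp_subst[OF \<alpha>])
qed

lemma phi_hom: "pqf_hom_to_A L W \<phi>"
  unfolding pqf_hom_to_A_def
  using phi_subset_tuples
  by (simp add: phi_zero phi_one phi_join phi_meet phi_delta phi_psub)

end

theorem lemma4p16:
  fixes L :: "'a pqf_alg" and n :: nat and F :: "'a set"
    and Fs :: "nat \<Rightarrow> 'w" and W :: "'w set"
  assumes "pqf_closed L" and "pqf_ax1 L" and "pqf_ax2 L" and "pqf_ax3 L"
    and "pqf_ax11 L" and "pqf_ax12 L" and "pqf_ax13 L"
    and "prime_filter L n F"
    and "\<forall>i\<in>{1..n}. \<forall>j\<in>{1..n}. Fs i = Fs j \<longleftrightarrow> pdelta L n i j \<in> F"
    and "W = Fs ` {1..n}"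
  shows "(\<forall>k. \<forall>\<alpha>\<in>substs k n. \<forall>r\<in>car L k.
            tuple_sub k \<alpha> Fs \<in> phiF L n F Fs k r \<longleftrightarrow> psub L k n \<alpha> r \<in> F)
       \<and> pqf_hom_to_A L W (phiF L n F Fs)"
proof -
  interpret pqf_canonical_model L n F Fs
    using assms by unfold_locales
  have "pqf_hom_to_A L W (phiF L n F Fs)"
    unfolding \<open>W = Fs ` {1..n}\<close> by (rule phi_hom)
  then show ?thesis
    by (simp add: tuple_sub_mem_phi_iff)
qed

end
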